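(* Let $L\ge1$, $\delta>0$, $\lambda^0=(\lambda^0_1,\dots,\lambda^0_L)\in(0,\infty)^L$, and let $c_1,\dots,c_L:[0,\infty)\to\mathbb{R}$ be continuous and strictly increasing. For $m\in\mathbb{N}$ put $\lambda^m_i=m\lambda^0_i$ and, for $\beta=(\beta_1,\dots,\beta_L)\in[0,\infty)^L$, $$f_m(\beta)=\sum_{i=1}^L c_i(\beta_i)+\delta\Big(1-\prod_{i=1}^L\big(1-\tilde\alpha(\beta_i,\lambda^m_i)\big)\Big),\qquad g_m(\beta)=\sum_{i=1}^L c_i(\beta_i)+\delta\Big(1-\prod_{i=1}^L\big(1-UB(\beta_i,\lambda^m_i)\big)\Big).$$ Then $\displaystyle\lim_{m\to\infty}\sup_{\beta\ge0}\big(g_m(\beta)-f_m(\beta)\big)=0.$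
   Context: $\phi,\Phi$ are the standard normal density and distribution function. For $\lambda>0$ and real $n\ge 0$, $\bar\alpha(n,\lambda)=\min\Big\{1,\big[\lambda\int_0^\infty t e^{-\lambda t}(1+t)^{n-1}\,dt\big]^{-1}\Big\}$ is the continuous Erlang-C function, and $\tilde\alpha(\beta,\lambda)=\bar\alpha(\lambda+\beta\sqrt\lambda,\lambda)$. For $\lambda>0,\beta\ge 0$ set $n=\lambda+\beta\sqrt{\lambda}$, $\rho=\lambda/n$, $a=\sqrt{-2n(1-\rho+\ln\rho)}$, $\gamma=(n-\lambda)/\sqrt{n}$, and $UB(\beta,\lambda)=\left[\rho+\gamma\left(\frac{\Phi(a)}{\phi(a)}+\frac{2}{3\sqrt{n}}\right)\right]^{-1}$ (so $UB(0,\lambda)=1$). It is known (Janssen, van Leeuwaarden and Zwart) that $\tilde\alpha(\beta,\lambda)\le UB(\beta,\lambda)$ for all $\lambda,\beta>0$. *)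

theory Defs
  imports "HOL-Analysis.Analysis"
begin

definition std_phi :: "real \<Rightarrow> real" where
  "std_phi x = exp (- (x^2) / 2) / sqrt (2 * pi)"

definition std_Phi :: "real \<Rightarrow> real" where
  "std_Phi x = (LBINT t:{..x}. std_phi t)"

definition erlangC_cont :: "real \<Rightarrow> real \<Rightarrow> real" where
  "erlangC_cont n lam =
     min 1 (inverse (lam * (LBINT t:{0..}. t * exp (- lam * t) * (1 + t) powr (n - 1))))"

definition alpha_tilde :: "real \<Rightarrow> real \<Rightarrow> real" where
  "alpha_tilde \<beta> lam = erlangC_cont (lam + \<beta> * sqrt lam) lam"

text \<open>Upper bound UB(beta, lambda) of Janssen, van Leeuwaarden and Zwart.\<close>
definition UB :: "real \<Rightarrow> real \<Rightarrow> real" where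
  "UB \<beta> lam =
    (let n = lam + \<beta> * sqrt lam;
         \<rho> = lam / n;
         a = sqrt (- 2 * n * (1 - \<rho> + ln \<rho>));
         \<gamma> = (n - lam) / sqrt n
     in inverse (\<rho> + \<gamma> * (std_Phi a / std_phi a + 2 / (3 * sqrt n))))"

end

theory Submission
  imports Defs "HOL-Real_Asymp.Real_Asymp"
begin

text \<open>Integrating the Erlang-C integral by parts and substituting \<open>t = u / \<surd>n\<close> gives
  \<open>\<alpha>(\<beta>, \<lambda>) = min 1 (1 / (\<rho> (1 + \<gamma> K)))\<close>, where \<open>K = \<integral> e^(\<gamma> u) h\<^sub>n(u) du\<close> over \<open>[0, \<infinity>)\<close> and
  \<open>h\<^sub>n(u) = (1 + u/\<surd>n)^n e^(-\<surd>n u) \<ge> e^(-u^2/2)\<close>; on the other side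
  \<open>\<Phi>(a)/\<phi>(a) = G(a) = \<integral> e^(a u - u^2/2) du\<close> and \<open>\<gamma> \<le> a\<close>. Hence
  \<open>UB - \<alpha> \<le> 1/(\<rho> + \<gamma> G(\<gamma>)) - 1/(\<rho> + \<gamma> K)\<close>. Since \<open>G \<ge> 1/2\<close>, this is at most \<open>2/\<gamma> \<le> \<epsilon>\<close> when
  \<open>\<gamma> \<ge> 2/\<epsilon>\<close>, and otherwise at most \<open>4 \<gamma> (K - G(\<gamma>)) \<le> (8/\<epsilon>) \<integral> e^(2u/\<epsilon>) (h\<^sub>n(u) - e^(-u^2/2)) du\<close>,
  which tends to 0 as \<open>n \<rightarrow> \<infinity>\<close> by dominated convergence. So \<open>UB - \<alpha> \<le> \<epsilon>\<close> uniformly in \<open>\<beta>\<close>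
  once \<open>\<lambda>\<close> is large, and the products over the \<open>L\<close> stations inherit this bound; at \<open>\<beta> = 0\<close> both
  functions equal 1, which makes the supremum nonnegative.\<close>

lemma ln_add_one_ge_quadratic:
  fixes x :: real assumes "0 \<le> x" shows "x - x^2/2 \<le> ln (1 + x)"
proof -
  let ?g = "\<lambda>x::real. ln (1 + x) - x + x^2/2"
  have "?g 0 \<le> ?g x"
  proof (rule deriv_nonneg_imp_mono[where g="?g" and g'="\<lambda>x. 1 / (1 + x) - 1 + x"])
    fix y assume y: "y \<in> {0..x}"
    show "(?g has_real_derivative 1 / (1 + y) - 1 + y) (at y)"
      using y by (auto intro!: derivative_eq_intros)
    have "1 / (1 + y) - 1 + y = y^2 / (1 + y)" using y by (simp add: field_simps power2_eq_square)
    then show "0 \<le> 1 / (1 + y) - 1 + y" using y by simp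
  qed (use assms in auto)
  then show ?thesis by simp
qed

lemma ln_add_one_le_cubic:
  fixes x :: real assumes "0 \<le> x" shows "ln (1 + x) \<le> x - x^2/2 + x^3/3"
proof -
  let ?g = "\<lambda>x::real. x - x^2/2 + x^3/3 - ln (1 + x)"
  have "?g 0 \<le> ?g x"
  proof (rule deriv_nonneg_imp_mono[where g="?g" and g'="\<lambda>x. 1 - x + x^2 - 1 / (1 + x)"])
    fix y assume y: "y \<in> {0..x}"
    show "(?g has_real_derivative 1 - y + y^2 - 1 / (1 + y)) (at y)"
      using y by (auto intro!: derivative_eq_intros simp: power2_eq_square)
    have "1 - y + y^2 - 1 / (1 + y) = y^3 / (1 + y)"
      using y by (simp add: field_simps power2_eq_square power3_eq_cube)
    then show "0 \<le> 1 - y + y^2 - 1 / (1 + y)" using y by simp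
  qed (use assms in auto)
  then show ?thesis by simp
qed

lemma ln_add_one_le_rational:
  fixes x :: real assumes "0 \<le> x" shows "ln (1 + x) \<le> x - x^2 / (2 * (1 + x))"
proof -
  let ?g = "\<lambda>x::real. x - x^2 / (2 * (1 + x)) - ln (1 + x)"
  have "?g 0 \<le> ?g x"
  proof (rule deriv_nonneg_imp_mono[where g="?g" and g'="\<lambda>x. x^2 / (2 * (1 + x)^2)"])
    fix y assume y: "y \<in> {0..x}"
    show "(?g has_real_derivative y^2 / (2 * (1 + y)^2)) (at y)"
      using y apply (auto intro!: derivative_eq_intros)
       apply (simp add: divide_simps)
      by (simp add: algebra_simps power2_eq_square)
  qed (use assms in auto)
  then show ?thesis by simp
qed

lemma minus_ln_ge_quadratic:
  fixes r :: real assumes "0 < r" "r \<le> 1" shows "(1 - r) + (1 - r)^2/2 \<le> - ln r"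
proof -
  let ?g = "\<lambda>r::real. - ln r - (1 - r) - (1 - r)^2/2"
  have "?g 1 \<le> ?g r"
  proof (rule deriv_nonpos_imp_antimono[where g="?g" and g'="\<lambda>r. - ((1 - r)^2 / r)"])
    fix y assume y: "y \<in> {r..1}"
    show "(?g has_real_derivative - ((1 - y)^2 / y)) (at y)"
      using y assms by (auto intro!: derivative_eq_intros simp: field_simps power2_eq_square)
  qed (use assms in auto)
  then show ?thesis by simp
qed

lemma set_integrable_exp_minus_linear:
  fixes a c :: real assumes "0 < a"
  shows "set_integrable lborel {c..} (\<lambda>x. exp (- a * x))"
proof -
  have "(\<lambda>x. exp (- a * x)) absolutely_integrable_on {c..}"
    by (rule nonnegative_absolutely_integrable_1[OF integrable_on_exp_minus_to_infinity[OF assms]]) auto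
  then show ?thesis
    unfolding set_integrable_def
    by (subst (asm) integrable_completion) (auto intro!: borel_measurable_continuous_on_indicator continuous_intros)
qed

text \<open>Bound obtained from \<open>ln y \<le> y - 1\<close> applied to \<open>y = k (1 + t)\<close> with \<open>k = lam / (2 (n + 1))\<close>.\<close>
lemma exp_mult_powr_le:
  fixes lam n t :: real assumes "0 < lam" "0 \<le> n" "0 \<le> t"
  shows "exp (- lam * t) * (1 + t) powr n
           \<le> exp (lam/2 - (n + 1) * (1 + ln (lam / (2 * (n + 1))))) * exp (- (lam/2) * t)"
proof -
  define k where "k = lam / (2 * (n + 1))"
  have k: "0 < k" using assms by (simp add: k_def)
  have "ln (k * (1 + t)) \<le> k * (1 + t) - 1" using k assms by (intro ln_le_minus_one) auto
  then have l: "ln (1 + t) \<le> k * (1 + t) - 1 - ln k" using k assms by (simp add: ln_mult)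
  have "n * ln (1 + t) \<le> (n + 1) * ln (1 + t)" using assms by (simp add: algebra_simps)
  also have "\<dots> \<le> (n + 1) * (k * (1 + t) - 1 - ln k)" using l assms by (intro mult_left_mono) auto
  also have "\<dots> = lam/2 * (1 + t) - (n + 1) * (1 + ln k)" using assms by (simp add: k_def field_simps)
  finally have *: "n * ln (1 + t) \<le> lam/2 * (1 + t) - (n + 1) * (1 + ln k)" .
  have "exp (- lam * t) * (1 + t) powr n = exp (- lam * t + n * ln (1 + t))"
    using assms by (simp add: powr_def exp_add[symmetric])
  also have "\<dots> \<le> exp (- lam * t + lam/2 * (1 + t) - (n + 1) * (1 + ln k))" using * by simp
  also have "\<dots> = exp (lam/2 - (n + 1) * (1 + ln k)) * exp (- (lam/2) * t)"
    by (simp add: exp_add[symmetric] field_simps)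
  finally show ?thesis by (simp add: k_def)
qed

lemma set_integrable_exp_mult_powr:
  fixes lam n :: real assumes "0 < lam" "0 \<le> n"
  shows "set_integrable lborel {0..} (\<lambda>t. exp (- lam * t) * (1 + t) powr n)"
proof (rule set_integrable_bound)
  define C where "C = exp (lam/2 - (n + 1) * (1 + ln (lam / (2 * (n + 1)))))"
  show "set_integrable lborel {0..} (\<lambda>t. C * exp (- (lam/2) * t))"
    using set_integrable_exp_minus_linear[of "lam/2" 0] assms by simp
  show "set_borel_measurable lborel {0..} (\<lambda>t. exp (- lam * t) * (1 + t) powr n)"
    unfolding set_borel_measurable_def
    by (auto intro!: borel_measurable_continuous_on_indicator continuous_intros)
  show "AE t in lborel. t \<in> {0..} \<longrightarrow>
          norm (exp (- lam * t) * (1 + t) powr n) \<le> norm (C * exp (- (lam/2) * t))"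
    using exp_mult_powr_le[OF assms] by (auto simp: C_def)
qed

lemma exp_mult_powr_tendsto_zero:
  fixes lam n :: real assumes "0 < lam" "0 \<le> n"
  shows "((\<lambda>t. exp (- lam * t) * (1 + t) powr n) \<longlongrightarrow> 0) at_top"
proof -
  define C where "C = exp (lam/2 - (n + 1) * (1 + ln (lam / (2 * (n + 1)))))"
  have upper: "\<forall>\<^sub>F t in at_top. exp (- lam * t) * (1 + t) powr n \<le> C * exp (- (lam/2) * t)"
    using eventually_ge_at_top[of 0]
    by eventually_elim (use exp_mult_powr_le[OF assms] in \<open>simp add: C_def\<close>)
  have lim: "((\<lambda>t. C * exp (- (lam/2) * t)) \<longlongrightarrow> 0) at_top"
    using assms(1) by real_asymp
  show ?thesis
    by (rule tendsto_sandwich[OF _ upper tendsto_const lim]) simp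
qed

text \<open>Integration by parts, using \<open>d/dt (e^{-\<lambda>t} (1+t)^n) = -\<lambda> e^{-\<lambda>t} (1+t)^n + n e^{-\<lambda>t} (1+t)^{n-1}\<close>
  and \<open>t (1+t)^{n-1} = (1+t)^n - (1+t)^{n-1}\<close>.\<close>
lemma erlang_integral_by_parts:
  fixes lam n :: real assumes lam: "0 < lam" and n: "0 < n"
  shows "lam * (LBINT t:{0..}. t * exp (- lam * t) * (1 + t) powr (n - 1))
       = lam/n + lam * (1 - lam/n) * (LBINT t:{0..}. exp (- lam * t) * (1 + t) powr n)"
proof -
  define \<rho> where "\<rho> = lam/n"
  define f where "f t = exp (- lam * t) * (1 + t) powr n" for t
  define w where "w t = t * exp (- lam * t) * (1 + t) powr (n - 1)" for t
  define H where "H t = lam * (1 - \<rho>) * f t - lam * w t" for t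
  have f_int: "set_integrable lborel {0..} f"
    unfolding f_def using set_integrable_exp_mult_powr lam n by simp
  have powr_split: "(1 + t) powr n = (1 + t) * (1 + t) powr (n - 1)" if "0 \<le> t" for t :: real
    using that by (simp add: powr_mult_base)
  have w_int: "set_integrable lborel {0..} w"
  proof (rule set_integrable_bound[OF f_int])
    show "set_borel_measurable lborel {0..} w"
      unfolding set_borel_measurable_def w_def
      by (auto intro!: borel_measurable_continuous_on_indicator continuous_intros)
    have "norm (w t) \<le> norm (f t)" if "0 \<le> t" for t
    proof -
      have "t * (1 + t) powr (n - 1) \<le> (1 + t) * (1 + t) powr (n - 1)"
        using that by (intro mult_right_mono) auto
      then show ?thesis
        using that unfolding w_def f_def by (simp add: powr_split mult_ac abs_mult)
    qed
    then show "AE t in lborel. t \<in> {0..} \<longrightarrow> norm (w t) \<le> norm (f t)"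
      by auto
  qed
  have H_int: "set_integrable lborel {0..} H"
    unfolding H_def using f_int w_int by (intro set_integral_diff set_integrable_mult_right) auto
  have H_deriv: "((\<lambda>t. \<rho> * f t) has_real_derivative H t) (at t)" if "0 \<le> t" for t
  proof -
    have "((\<lambda>t. \<rho> * f t) has_real_derivative
           \<rho> * (- lam * exp (- lam * t) * (1 + t) powr n + exp (- lam * t) * (n * (1 + t) powr (n - 1))))
          (at t)"
      unfolding f_def using that by (auto intro!: derivative_eq_intros)
    moreover have "\<rho> * (- lam * exp (- lam * t) * (1 + t) powr n
                     + exp (- lam * t) * (n * (1 + t) powr (n - 1))) = H t"
      unfolding H_def f_def w_def \<rho>_def using that n by (simp add: powr_split field_simps)
    ultimately show ?thesis by simp
  qed
  have FTC: "(LBINT t:{0..b}. H t) = \<rho> * f b - \<rho> * f 0" if "0 \<le> b" for b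
    unfolding set_lebesgue_integral_def
  proof (rule integral_FTC_atLeastAtMost[OF that])
    show "continuous_on {0..b} H"
      unfolding H_def f_def w_def by (auto intro!: continuous_intros)
    fix t assume "0 \<le> t" "t \<le> b"
    then show "((\<lambda>t. \<rho> * f t) has_vector_derivative H t) (at t within {0..b})"
      using H_deriv by (auto simp: has_real_derivative_iff_has_vector_derivative[symmetric]
                             intro: has_field_derivative_at_within)
  qed
  have "((\<lambda>b. LBINT t:{0..b}. H t) \<longlongrightarrow> (LBINT t:{0..}. H t)) at_top"
    by (rule tendsto_set_lebesgue_integral_at_top[OF _ H_int]) auto
  moreover have "((\<lambda>b. LBINT t:{0..b}. H t) \<longlongrightarrow> \<rho> * 0 - \<rho> * f 0) at_top"
  proof (rule Lim_transform_eventually)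
    show "((\<lambda>b. \<rho> * f b - \<rho> * f 0) \<longlongrightarrow> \<rho> * 0 - \<rho> * f 0) at_top"
      unfolding f_def using exp_mult_powr_tendsto_zero lam n by (intro tendsto_intros) auto
    show "\<forall>\<^sub>F b in at_top. \<rho> * f b - \<rho> * f 0 = (LBINT t:{0..b}. H t)"
      using eventually_ge_at_top[of 0] by eventually_elim (simp add: FTC)
  qed
  ultimately have "(LBINT t:{0..}. H t) = - \<rho>"
    by (auto dest: tendsto_unique[OF trivial_limit_at_top_linorder] simp: f_def)
  moreover have "(LBINT t:{0..}. H t) = lam * (1 - \<rho>) * (LBINT t:{0..}. f t) - lam * (LBINT t:{0..}. w t)"
    unfolding H_def using f_int w_int by (subst set_integral_diff) auto
  ultimately show ?thesis unfolding \<rho>_def f_def w_def by (simp add: algebra_simps)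
qed

lemma set_integral_nonneg_reals_scale:
  fixes f :: "real \<Rightarrow> real" and c :: real assumes "0 < c"
  shows "(LBINT t:{0..}. f t) = c * (LBINT u:{0..}. f (c * u))"
proof -
  have "(LBINT t:{0..}. f t) = \<bar>c\<bar> *\<^sub>R (\<integral>u. indicator {0..} (0 + c * u) *\<^sub>R f (0 + c * u) \<partial>lborel)"
    unfolding set_lebesgue_integral_def by (rule lborel_integral_real_affine) (use assms in simp)
  also have "(\<lambda>u. indicator {0..} (0 + c * u) *\<^sub>R f (0 + c * u)) = (\<lambda>u. indicator {0..} u *\<^sub>R f (c * u))"
    using assms by (auto simp: indicator_def zero_le_mult_iff fun_eq_iff)
  finally show ?thesis using assms by (simp add: set_lebesgue_integral_def)
qed

lemma set_integrable_nonneg_reals_scale: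
  fixes f :: "real \<Rightarrow> real" and c :: real
  assumes "0 < c" and "set_integrable lborel {0..} f"
  shows "set_integrable lborel {0..} (\<lambda>u. f (c * u))"
proof -
  have "integrable lborel (\<lambda>u. indicator {0..} (0 + c * u) *\<^sub>R f (0 + c * u))"
    using assms unfolding set_integrable_def by (intro lborel_integrable_real_affine) auto
  also have "(\<lambda>u. indicator {0..} (0 + c * u) *\<^sub>R f (0 + c * u)) = (\<lambda>u. indicator {0..} u *\<^sub>R f (c * u))"
    using assms by (auto simp: indicator_def zero_le_mult_iff fun_eq_iff)
  finally show ?thesis unfolding set_integrable_def .
qed

definition Phi_div_phi :: "real \<Rightarrow> real" where
  "Phi_div_phi a = (LBINT u:{0..}. exp (a * u - u^2/2))"

lemma std_Phi_eq: "std_Phi a = std_phi a * Phi_div_phi a"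
proof -
  have "std_Phi a = \<bar>-1\<bar> *\<^sub>R (\<integral>u. indicator {..a} (a + (-1) * u) *\<^sub>R std_phi (a + (-1) * u) \<partial>lborel)"
    unfolding std_Phi_def set_lebesgue_integral_def by (rule lborel_integral_real_affine) simp
  also have "(\<lambda>u. indicator {..a} (a + (-1) * u) *\<^sub>R std_phi (a + (-1) * u)) =
             (\<lambda>u. std_phi a * (indicator {0..} u *\<^sub>R exp (a * u - u^2/2)))"
  proof
    fix u :: real
    have "std_phi (a - u) = std_phi a * exp (a * u - u^2/2)"
      unfolding std_phi_def by (simp add: exp_add[symmetric] power2_eq_square field_simps)
    then show "indicator {..a} (a + (-1) * u) *\<^sub>R std_phi (a + (-1) * u)
               = std_phi a * (indicator {0..} u *\<^sub>R exp (a * u - u^2/2))"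
      by (auto simp: indicator_def)
  qed
  finally show ?thesis by (simp add: Phi_div_phi_def set_lebesgue_integral_def)
qed

lemma std_Phi_div_std_phi: "std_Phi a / std_phi a = Phi_div_phi a"
  by (simp add: std_Phi_eq std_phi_def)

lemma set_integrable_exp_gauss:
  fixes a :: real shows "set_integrable lborel {0..} (\<lambda>u. exp (a * u - u^2/2))"
proof (rule set_integrable_bound)
  show "set_integrable lborel {0..} (\<lambda>u. exp ((a + 1)^2/2) * exp (- 1 * u))"
    using set_integrable_exp_minus_linear[of 1 0] by simp
  show "set_borel_measurable lborel {0..} (\<lambda>u. exp (a * u - u^2/2))"
    unfolding set_borel_measurable_def
    by (auto intro!: borel_measurable_continuous_on_indicator continuous_intros)
  have "a * u - u^2/2 \<le> (a + 1)^2/2 + - 1 * u" for u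
    using sum_squares_ge_zero[of "u - (a + 1)" 0] by (simp add: power2_eq_square algebra_simps)
  then show "AE u in lborel. u \<in> {0..} \<longrightarrow>
               norm (exp (a * u - u^2/2)) \<le> norm (exp ((a + 1)^2/2) * exp (- 1 * u))"
    by (simp add: exp_add[symmetric])
qed

lemma Phi_div_phi_mono: "a \<le> b \<Longrightarrow> Phi_div_phi a \<le> Phi_div_phi b"
  unfolding Phi_div_phi_def
  by (rule set_integral_mono[OF set_integrable_exp_gauss set_integrable_exp_gauss])
     (auto intro!: mult_right_mono)

lemma Phi_div_phi_ge_half:
  assumes "0 \<le> a" shows "1/2 \<le> Phi_div_phi a"
proof -
  have int: "set_integrable lborel {0..} (\<lambda>u. indicator {0..1::real} u / 2 :: real)"
    unfolding set_integrable_def by (rule integrable_mult_indicator) auto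
  have "(LBINT u:{0..}. indicator {0..1::real} u / 2 :: real) = (\<integral>u. indicator {0..1::real} u / 2 \<partial>lborel)"
    unfolding set_lebesgue_integral_def
    by (rule Bochner_Integration.integral_cong[OF refl]) (auto simp: indicator_def)
  then have "1/2 = (LBINT u:{0..}. indicator {0..1::real} u / 2 :: real)"
    by simp
  also have "\<dots> \<le> Phi_div_phi 0"
    unfolding Phi_div_phi_def
  proof (rule set_integral_mono[OF int set_integrable_exp_gauss])
    fix u :: real assume u: "u \<in> {0..}"
    show "indicator {0..1} u / 2 \<le> exp (0 * u - u^2/2)"
    proof (cases "u \<le> 1")
      case True
      then have "u^2 \<le> 1" using u by (simp add: power_le_one)
      moreover have "1 - u^2/2 \<le> exp (- (u^2)/2)" using exp_ge_add_one_self[of "- (u^2)/2"] by simp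
      ultimately show ?thesis using True u by (simp add: indicator_def)
    qed (simp add: indicator_def)
  qed
  also have "\<dots> \<le> Phi_div_phi a" using Phi_div_phi_mono assms by simp
  finally show ?thesis .
qed

definition gauss_approx :: "real \<Rightarrow> real \<Rightarrow> real" where
  "gauss_approx n u = (1 + u / sqrt n) powr n * exp (- sqrt n * u)"

lemma gauss_approx_eq_exp:
  assumes "0 < n" "0 \<le> u"
  shows "gauss_approx n u = exp (n * ln (1 + u / sqrt n) - sqrt n * u)"
proof -
  have "0 < u + sqrt n" using assms by (simp add: add_nonneg_pos)
  then show ?thesis using assms by (simp add: gauss_approx_def powr_def exp_diff exp_minus field_simps)
qed

lemma gauss_approx_bounds:
  assumes n: "0 < n" and u: "0 \<le> u"
  shows exp_minus_square_le_gauss_approx: "exp (- (u^2)/2) \<le> gauss_approx n u"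
    and gauss_approx_le_cubic: "gauss_approx n u \<le> exp (- (u^2)/2 + u^3 / (3 * sqrt n))"
    and gauss_approx_le_rational: "gauss_approx n u \<le> exp (- (u^2) / (2 * (1 + u / sqrt n)))"
proof -
  define s where "s = sqrt n"
  have s: "0 < s" using n by (simp add: s_def)
  define x where "x = u / s"
  have x: "0 \<le> x" using u s by (simp add: x_def)
  have e: "gauss_approx n u = exp (n * ln (1 + x) - s * u)"
    using gauss_approx_eq_exp[OF n u] by (simp add: s_def x_def)
  have nx: "n * x = s * u" "n * x^2 = u^2" "n * x^3 = u^3 / s"
    using s n by (simp_all add: x_def s_def power2_eq_square power3_eq_cube field_simps)
  have "n * (x - x^2/2) \<le> n * ln (1 + x)"
    using ln_add_one_ge_quadratic[OF x] n by (intro mult_left_mono) auto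
  then show "exp (- (u^2)/2) \<le> gauss_approx n u" unfolding e using nx by (simp add: algebra_simps)
  have "n * ln (1 + x) \<le> n * (x - x^2/2 + x^3/3)"
    using ln_add_one_le_cubic[OF x] n by (intro mult_left_mono) auto
  then show "gauss_approx n u \<le> exp (- (u^2)/2 + u^3 / (3 * sqrt n))"
    unfolding e using nx by (simp add: s_def algebra_simps)
  have "n * ln (1 + x) \<le> n * (x - x^2 / (2 * (1 + x)))"
    using ln_add_one_le_rational[OF x] n by (intro mult_left_mono) auto
  also have "\<dots> = s * u - u^2 / (2 * (1 + x))"
    using nx x by (simp add: right_diff_distrib)
  finally show "gauss_approx n u \<le> exp (- (u^2) / (2 * (1 + u / sqrt n)))"
    unfolding e x_def s_def by simp
qed

lemma gauss_approx_tendsto: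
  assumes "0 \<le> u" shows "((\<lambda>n. gauss_approx n u) \<longlongrightarrow> exp (- (u^2)/2)) at_top"
proof (rule tendsto_sandwich[OF _ _ tendsto_const])
  show "\<forall>\<^sub>F n in at_top. exp (- (u^2)/2) \<le> gauss_approx n u"
    using eventually_gt_at_top[of 0] by eventually_elim (rule exp_minus_square_le_gauss_approx[OF _ assms])
  show "\<forall>\<^sub>F n in at_top. gauss_approx n u \<le> exp (- (u^2)/2 + u^3 / (3 * sqrt n))"
    using eventually_gt_at_top[of 0] by eventually_elim (rule gauss_approx_le_cubic[OF _ assms])
  show "((\<lambda>n. exp (- (u^2)/2 + u^3 / (3 * sqrt n))) \<longlongrightarrow> exp (- (u^2)/2)) at_top"
    by real_asymp
qed

lemma set_integrable_exp_mult_gauss_approx: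
  assumes n: "0 < n" and \<gamma>: "\<gamma> < sqrt n"
  shows "set_integrable lborel {0..} (\<lambda>u. exp (\<gamma> * u) * gauss_approx n u)"
proof -
  have sn: "0 < sqrt n" using n by simp
  have "\<gamma> * sqrt n < sqrt n * sqrt n" using mult_strict_right_mono[OF \<gamma> sn] .
  then have "set_integrable lborel {0..} (\<lambda>t. exp (- (n - \<gamma> * sqrt n) * t) * (1 + t) powr n)"
    using n by (intro set_integrable_exp_mult_powr) auto
  then have "set_integrable lborel {0..}
               (\<lambda>u. exp (- (n - \<gamma> * sqrt n) * ((1 / sqrt n) * u)) * (1 + (1 / sqrt n) * u) powr n)"
    by (rule set_integrable_nonneg_reals_scale[rotated]) (use sn in simp)
  moreover have "exp (- (n - \<gamma> * sqrt n) * ((1 / sqrt n) * u)) * (1 + (1 / sqrt n) * u) powr n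
                 = exp (\<gamma> * u) * gauss_approx n u" for u
    using sn n unfolding gauss_approx_def
    by (simp add: exp_add[symmetric] field_simps real_sqrt_mult[symmetric])
  ultimately show ?thesis by simp
qed

text \<open>For \<open>u \<ge> s = 4\<Gamma> + 4\<close> and \<open>\<surd>n \<ge> s\<close> the Gaussian-type exponent \<open>u^2/(2(1 + u/\<surd>n))\<close>
  is at least \<open>s u / 4 = (\<Gamma> + 1) u\<close>.\<close>
lemma exp_mult_gauss_approx_le:
  fixes \<Gamma> n u :: real
  assumes \<Gamma>: "0 \<le> \<Gamma>" and n: "(4 * \<Gamma> + 4)^2 \<le> n" and u: "0 \<le> u"
  shows "exp (\<Gamma> * u) * gauss_approx n u \<le> exp ((\<Gamma> + 1) * (4 * \<Gamma> + 4)) * exp (- 1 * u)"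
proof -
  define s where "s = 4 * \<Gamma> + 4"
  have s: "0 < s" using \<Gamma> by (simp add: s_def)
  define r where "r = sqrt n"
  have rs: "s \<le> r" unfolding r_def using n s real_le_rsqrt by (simp add: s_def)
  have n0: "0 < n" using n s by (smt (verit) s_def zero_less_power)
  have r0: "0 < r" using rs s by simp
  have key: "\<Gamma> * u - u^2 * r / (2 * (r + u)) \<le> (\<Gamma> + 1) * s + - 1 * u"
  proof (cases "s \<le> u")
    case True
    have "r * s \<le> r * u" using True r0 by (intro mult_left_mono) auto
    moreover have "s * u \<le> r * u" using rs u by (intro mult_right_mono) auto
    ultimately have "s * (r + u) \<le> 2 * u * r" by (simp add: algebra_simps)
    then have "s * u * (r + u) \<le> 2 * u * r * u"
      using u by (metis mult.commute mult.left_commute mult_right_mono)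
    then have "(\<Gamma> + 1) * u \<le> u^2 * r / (2 * (r + u))"
      using r0 u by (simp add: s_def field_simps power2_eq_square)
    moreover have "0 \<le> \<Gamma> * s" using \<Gamma> s by simp
    ultimately show ?thesis using s u by (simp add: algebra_simps)
  next
    case False
    have "0 \<le> u^2 * r / (2 * (r + u))" using r0 u by simp
    moreover have "\<Gamma> * u \<le> \<Gamma> * s" using False \<Gamma> by (intro mult_left_mono) auto
    ultimately show ?thesis using False by (simp add: algebra_simps)
  qed
  have eq: "u^2 / (2 * (1 + u / sqrt n)) = u^2 * r / (2 * (r + u))"
    using r0 u by (simp add: r_def[symmetric] field_simps)
  have "exp (\<Gamma> * u) * gauss_approx n u \<le> exp (\<Gamma> * u) * exp (- (u^2) / (2 * (1 + u / sqrt n)))"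
    using gauss_approx_le_rational[OF n0 u] by simp
  also have "\<dots> = exp (\<Gamma> * u - u^2 * r / (2 * (r + u)))"
    unfolding minus_divide_left[symmetric] eq exp_minus exp_diff by (simp add: divide_inverse)
  also have "\<dots> \<le> exp ((\<Gamma> + 1) * s + - 1 * u)" using key by simp
  finally show ?thesis by (simp add: s_def exp_add[symmetric])
qed

definition gauss_defect :: "real \<Rightarrow> real \<Rightarrow> real" where
  "gauss_defect n \<Gamma> = (LBINT u:{0..}. exp (\<Gamma> * u) * (gauss_approx n u - exp (- (u^2)/2)))"

lemma gauss_defect_integrand_bounds:
  fixes \<Gamma> n u :: real
  assumes \<Gamma>: "0 \<le> \<Gamma>" and n: "(4 * \<Gamma> + 4)^2 \<le> n" and u: "0 \<le> u"
  shows "0 \<le> exp (\<Gamma> * u) * (gauss_approx n u - exp (- (u^2)/2))"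
    and "exp (\<Gamma> * u) * (gauss_approx n u - exp (- (u^2)/2))
           \<le> exp ((\<Gamma> + 1) * (4 * \<Gamma> + 4)) * exp (- 1 * u)"
proof -
  have n0: "0 < n" using n \<Gamma> by (smt (verit) zero_less_power)
  show "0 \<le> exp (\<Gamma> * u) * (gauss_approx n u - exp (- (u^2)/2))"
    using exp_minus_square_le_gauss_approx[OF n0 u] by simp
  have "exp (\<Gamma> * u) * (gauss_approx n u - exp (- (u^2)/2)) \<le> exp (\<Gamma> * u) * gauss_approx n u"
    by (simp add: right_diff_distrib)
  also have "\<dots> \<le> exp ((\<Gamma> + 1) * (4 * \<Gamma> + 4)) * exp (- 1 * u)"
    by (rule exp_mult_gauss_approx_le[OF \<Gamma> n u])
  finally show "exp (\<Gamma> * u) * (gauss_approx n u - exp (- (u^2)/2))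
                  \<le> exp ((\<Gamma> + 1) * (4 * \<Gamma> + 4)) * exp (- 1 * u)" .
qed

lemma gauss_approx_measurable [measurable]: "gauss_approx n \<in> borel_measurable borel"
  unfolding gauss_approx_def by measurable

lemma set_integrable_gauss_defect:
  assumes "0 \<le> \<Gamma>" "(4 * \<Gamma> + 4)^2 \<le> n"
  shows "set_integrable lborel {0..} (\<lambda>u. exp (\<Gamma> * u) * (gauss_approx n u - exp (- (u^2)/2)))"
proof (rule set_integrable_bound)
  show "set_integrable lborel {0..} (\<lambda>u. exp ((\<Gamma> + 1) * (4 * \<Gamma> + 4)) * exp (- 1 * u))"
    using set_integrable_exp_minus_linear[of 1 0] by simp
  show "set_borel_measurable lborel {0..} (\<lambda>u. exp (\<Gamma> * u) * (gauss_approx n u - exp (- (u^2)/2)))"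
    unfolding set_borel_measurable_def by measurable
  show "AE u in lborel. u \<in> {0..} \<longrightarrow> norm (exp (\<Gamma> * u) * (gauss_approx n u - exp (- (u^2)/2)))
          \<le> norm (exp ((\<Gamma> + 1) * (4 * \<Gamma> + 4)) * exp (- 1 * u))"
    using gauss_defect_integrand_bounds[OF assms] by auto
qed

lemma gauss_defect_tendsto_zero:
  assumes \<Gamma>: "0 \<le> \<Gamma>" shows "((\<lambda>n. gauss_defect n \<Gamma>) \<longlongrightarrow> 0) at_top"
proof -
  define C where "C = exp ((\<Gamma> + 1) * (4 * \<Gamma> + 4))"
  define s where "s n = (\<lambda>u::real. indicator {0..} u *\<^sub>R (exp (\<Gamma> * u) * (gauss_approx n u - exp (- (u^2)/2))))"
    for n :: real
  have "((\<lambda>n. integral\<^sup>L lborel (s n)) \<longlongrightarrow> integral\<^sup>L lborel (\<lambda>u::real. 0::real)) at_top"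
  proof (rule integral_dominated_convergence_at_top[where w="\<lambda>u. indicator {0..} u *\<^sub>R (C * exp (- 1 * u))"])
    show "s n \<in> borel_measurable lborel" for n
      unfolding s_def by measurable
    show "integrable lborel (\<lambda>u. indicator {0..} u *\<^sub>R (C * exp (- 1 * u)))"
      using integrable_mult_left[OF set_integrable_exp_minus_linear[of 1 0, unfolded set_integrable_def], of C]
      by (simp add: mult_ac)
    have "((\<lambda>n. s n u) \<longlongrightarrow> 0) at_top" for u
    proof (cases "0 \<le> u")
      case True
      have "((\<lambda>n. s n u) \<longlongrightarrow> indicator {0..} u *\<^sub>R (exp (\<Gamma> * u) * (exp (- (u^2)/2) - exp (- (u^2)/2)))) at_top"
        unfolding s_def by (intro tendsto_intros gauss_approx_tendsto True)
      then show ?thesis by simp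
    qed (simp add: s_def)
    then show "AE u in lborel. ((\<lambda>n. s n u) \<longlongrightarrow> 0) at_top" by simp
    show "\<forall>\<^sub>F n in at_top. AE u in lborel. norm (s n u) \<le> indicator {0..} u *\<^sub>R (C * exp (- 1 * u))"
      using eventually_ge_at_top[of "(4 * \<Gamma> + 4)^2"]
      by eventually_elim (use gauss_defect_integrand_bounds[OF \<Gamma>] in \<open>auto simp: s_def C_def indicator_def\<close>)
  qed simp
  then show ?thesis by (simp add: gauss_defect_def set_lebesgue_integral_def s_def)
qed

lemma inverse_diff_le:
  fixes c p q :: real
  assumes "0 < c" "c \<le> p" "p \<le> q"
  shows "1/p - 1/q \<le> (q - p) / c^2"
proof -
  have "c^2 \<le> p * q" using assms by (simp add: power2_eq_square mult_mono)
  moreover have "1/p - 1/q = (q - p) / (p * q)" using assms by (simp add: field_simps)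
  ultimately show ?thesis using assms by (simp add: frac_le)
qed

locale staffing =
  fixes lam \<beta> :: real
  assumes lam_pos: "0 < lam" and beta_nonneg: "0 \<le> \<beta>"
begin

definition n where "n = lam + \<beta> * sqrt lam"
definition \<rho> where "\<rho> = lam / n"
definition \<gamma> where "\<gamma> = (n - lam) / sqrt n"
definition a where "a = sqrt (- 2 * n * (1 - \<rho> + ln \<rho>))"
definition K where "K = (LBINT u:{0..}. exp (\<gamma> * u) * gauss_approx n u)"

lemma lam_le_n: "lam \<le> n"
  using beta_nonneg lam_pos by (simp add: n_def)

lemma n_pos: "0 < n"
  using lam_le_n lam_pos by linarith

lemma rho_pos: "0 < \<rho>" and rho_le_1: "\<rho> \<le> 1"
  using lam_pos n_pos lam_le_n by (auto simp: \<rho>_def)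

lemma gamma_nonneg: "0 \<le> \<gamma>"
  using lam_le_n n_pos by (simp add: \<gamma>_def)

lemma gamma_less_sqrt_n: "\<gamma> < sqrt n"
  using lam_pos n_pos by (simp add: \<gamma>_def divide_less_eq real_sqrt_mult[symmetric])

lemma one_minus_rho: "1 - \<rho> = \<gamma> / sqrt n"
  using n_pos by (simp add: \<rho>_def \<gamma>_def field_simps real_sqrt_mult[symmetric])

lemma one_le_rho_plus_gamma:
  assumes "1 \<le> n" shows "1 \<le> \<rho> + \<gamma>"
proof -
  have "\<gamma> / sqrt n \<le> \<gamma>" using gamma_nonneg assms by (simp add: divide_le_eq mult_le_cancel_left1)
  then show ?thesis using one_minus_rho by linarith
qed

lemma gamma_le_a: "\<gamma> \<le> a"
proof -
  have "(1 - \<rho>) + (1 - \<rho>)^2/2 + ln \<rho> \<le> 0"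
    using minus_ln_ge_quadratic[OF rho_pos rho_le_1] by linarith
  then have "n * ((1 - \<rho>) + (1 - \<rho>)^2/2 + ln \<rho>) \<le> 0"
    using n_pos by (simp add: mult_nonneg_nonpos)
  moreover have "- 2 * n * (1 - \<rho> + ln \<rho>) - n * (1 - \<rho>)^2 = - 2 * (n * ((1 - \<rho>) + (1 - \<rho>)^2/2 + ln \<rho>))"
    by (simp add: algebra_simps)
  ultimately have "n * (1 - \<rho>)^2 \<le> - 2 * n * (1 - \<rho> + ln \<rho>)" by linarith
  moreover have "\<gamma>^2 = n * (1 - \<rho>)^2"
    using one_minus_rho n_pos by (simp add: power_divide)
  ultimately have "\<gamma>^2 \<le> - 2 * n * (1 - \<rho> + ln \<rho>)" by simp
  then have "sqrt (\<gamma>^2) \<le> a" unfolding a_def by (rule real_sqrt_le_mono)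
  then show ?thesis using gamma_nonneg by simp
qed

lemma set_integrable_K: "set_integrable lborel {0..} (\<lambda>u. exp (\<gamma> * u) * gauss_approx n u)"
  by (rule set_integrable_exp_mult_gauss_approx[OF n_pos gamma_less_sqrt_n])

text \<open>The substitution \<open>t = u / \<surd>n\<close> in the integration-by-parts form of the Erlang-C integral.\<close>
lemma alpha_tilde_eq: "alpha_tilde \<beta> lam = min 1 (inverse (\<rho> * (1 + \<gamma> * K)))"
proof -
  have sn: "0 < sqrt n" using n_pos by simp
  have "exp (- lam * ((1 / sqrt n) * u)) * (1 + (1 / sqrt n) * u) powr n = exp (\<gamma> * u) * gauss_approx n u" for u
  proof -
    have "- lam * ((1 / sqrt n) * u) = \<gamma> * u + - sqrt n * u"
      using sn n_pos by (simp add: \<gamma>_def field_simps real_sqrt_mult[symmetric])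
    then have "exp (- lam * ((1 / sqrt n) * u)) = exp (\<gamma> * u) * exp (- sqrt n * u)"
      by (simp only: exp_add)
    then show ?thesis unfolding gauss_approx_def by (simp add: mult_ac)
  qed
  then have scaled: "(LBINT t:{0..}. exp (- lam * t) * (1 + t) powr n) = (1 / sqrt n) * K"
    unfolding K_def using set_integral_nonneg_reals_scale[of "1 / sqrt n" "\<lambda>t. exp (- lam * t) * (1 + t) powr n"] sn
    by simp
  have "lam * (1 - lam / n) * (1 / sqrt n) = \<rho> * \<gamma>"
    using sn n_pos by (simp add: \<rho>_def \<gamma>_def field_simps)
  then have "lam / n + lam * (1 - lam / n) * ((1 / sqrt n) * K) = \<rho> * (1 + \<gamma> * K)"
    unfolding \<rho>_def by (metis distrib_left mult.assoc mult.right_neutral)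
  then have "lam * (LBINT t:{0..}. t * exp (- lam * t) * (1 + t) powr (n - 1)) = \<rho> * (1 + \<gamma> * K)"
    unfolding erlang_integral_by_parts[OF lam_pos n_pos] scaled .
  then show ?thesis unfolding alpha_tilde_def erlangC_cont_def n_def by simp
qed

lemma UB_eq: "UB \<beta> lam = inverse (\<rho> + \<gamma> * (Phi_div_phi a + 2 / (3 * sqrt n)))"
  unfolding UB_def Let_def n_def[symmetric] \<rho>_def[symmetric] \<gamma>_def[symmetric] a_def[symmetric]
  by (simp add: std_Phi_div_std_phi)

lemma Phi_div_phi_gamma_le_K: "Phi_div_phi \<gamma> \<le> K"
  unfolding Phi_div_phi_def K_def
proof (rule set_integral_mono[OF set_integrable_exp_gauss set_integrable_K])
  fix u :: real assume "u \<in> {0..}"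
  then have u: "0 \<le> u" by simp
  have "exp (\<gamma> * u - u^2/2) = exp (\<gamma> * u) * exp (- (u^2)/2)"
    by (simp add: exp_add[symmetric])
  also have "\<dots> \<le> exp (\<gamma> * u) * gauss_approx n u"
    using exp_minus_square_le_gauss_approx[OF n_pos u] by simp
  finally show "exp (\<gamma> * u - u^2/2) \<le> exp (\<gamma> * u) * gauss_approx n u" .
qed

lemma K_minus_Phi_div_phi_le_gauss_defect:
  assumes \<Gamma>: "\<gamma> \<le> \<Gamma>" and n: "(4 * \<Gamma> + 4)^2 \<le> n"
  shows "K - Phi_div_phi \<gamma> \<le> gauss_defect n \<Gamma>"
proof -
  have "K - Phi_div_phi \<gamma> = (LBINT u:{0..}. exp (\<gamma> * u) * gauss_approx n u - exp (\<gamma> * u - u^2/2))"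
    unfolding K_def Phi_div_phi_def
    by (rule set_integral_diff(2)[symmetric, OF set_integrable_K set_integrable_exp_gauss])
  also have "\<dots> \<le> gauss_defect n \<Gamma>"
    unfolding gauss_defect_def
  proof (rule set_integral_mono)
    show "set_integrable lborel {0..} (\<lambda>u. exp (\<gamma> * u) * gauss_approx n u - exp (\<gamma> * u - u^2/2))"
      by (rule set_integral_diff(1)[OF set_integrable_K set_integrable_exp_gauss])
    show "set_integrable lborel {0..} (\<lambda>u. exp (\<Gamma> * u) * (gauss_approx n u - exp (- (u^2)/2)))"
      using gamma_nonneg \<Gamma> n by (intro set_integrable_gauss_defect) auto
    fix u :: real assume "u \<in> {0..}"
    then have u: "0 \<le> u" by simp
    have "exp (\<gamma> * u - u^2/2) = exp (\<gamma> * u) * exp (- (u^2)/2)"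
      by (simp add: exp_add[symmetric])
    then have "exp (\<gamma> * u) * gauss_approx n u - exp (\<gamma> * u - u^2/2)
                 = exp (\<gamma> * u) * (gauss_approx n u - exp (- (u^2)/2))"
      by (simp add: right_diff_distrib)
    also have "\<dots> \<le> exp (\<Gamma> * u) * (gauss_approx n u - exp (- (u^2)/2))"
    proof (rule mult_right_mono)
      show "exp (\<gamma> * u) \<le> exp (\<Gamma> * u)" using \<Gamma> u by (simp add: mult_right_mono)
      show "0 \<le> gauss_approx n u - exp (- (u^2)/2)"
        using exp_minus_square_le_gauss_approx[OF n_pos u] by simp
    qed
    finally show "exp (\<gamma> * u) * gauss_approx n u - exp (\<gamma> * u - u^2/2)
                    \<le> exp (\<Gamma> * u) * (gauss_approx n u - exp (- (u^2)/2))" .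
  qed
  finally show ?thesis .
qed

lemma UB_le_inverse: "UB \<beta> lam \<le> 1 / (\<rho> + \<gamma> * Phi_div_phi \<gamma>)"
proof -
  have pos: "0 < \<rho> + \<gamma> * Phi_div_phi \<gamma>"
    using rho_pos gamma_nonneg Phi_div_phi_ge_half[OF gamma_nonneg] by (simp add: add_pos_nonneg)
  have "Phi_div_phi \<gamma> \<le> Phi_div_phi a + 2 / (3 * sqrt n)"
    using Phi_div_phi_mono[OF gamma_le_a] n_pos by (simp add: add_increasing2)
  then have le: "\<rho> + \<gamma> * Phi_div_phi \<gamma> \<le> \<rho> + \<gamma> * (Phi_div_phi a + 2 / (3 * sqrt n))"
    using gamma_nonneg by (simp add: mult_left_mono)
  show ?thesis
    unfolding UB_eq inverse_eq_divide using pos le by (intro divide_left_mono) auto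
qed

lemma UB_bounds:
  assumes "1 \<le> lam" shows "0 \<le> UB \<beta> lam" and "UB \<beta> lam \<le> 1"
proof -
  have sn: "1 \<le> sqrt n" using assms lam_le_n by simp
  have a: "1/2 \<le> Phi_div_phi a" using gamma_nonneg gamma_le_a by (intro Phi_div_phi_ge_half) linarith
  have "1 / sqrt n \<le> 1/2 + 2 / (3 * sqrt n)" using sn by (simp add: field_simps) (use sn in linarith)
  then have "\<gamma> * (1 / sqrt n) \<le> \<gamma> * (Phi_div_phi a + 2 / (3 * sqrt n))"
    using a gamma_nonneg by (intro mult_left_mono) auto
  then have "1 \<le> \<rho> + \<gamma> * (Phi_div_phi a + 2 / (3 * sqrt n))"
    using one_minus_rho by simp
  then show "0 \<le> UB \<beta> lam" "UB \<beta> lam \<le> 1"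
    unfolding UB_eq by (simp_all add: inverse_le_1_iff)
qed

lemma K_nonneg: "0 \<le> K"
  using Phi_div_phi_gamma_le_K Phi_div_phi_ge_half[OF gamma_nonneg] by linarith

lemma alpha_tilde_nonneg: "0 \<le> alpha_tilde \<beta> lam"
  unfolding alpha_tilde_eq using rho_pos gamma_nonneg K_nonneg by simp

lemma alpha_tilde_ge: "min 1 (1 / (\<rho> + \<gamma> * K)) \<le> alpha_tilde \<beta> lam"
proof -
  have \<gamma>K: "0 \<le> \<gamma> * K" using gamma_nonneg K_nonneg by simp
  have le: "\<rho> * (1 + \<gamma> * K) \<le> \<rho> + \<gamma> * K"
    using mult_right_mono[OF rho_le_1 \<gamma>K] by (simp add: distrib_left)
  have pos: "0 < \<rho> * (1 + \<gamma> * K)"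
    using rho_pos \<gamma>K by simp
  have "1 / (\<rho> + \<gamma> * K) \<le> inverse (\<rho> * (1 + \<gamma> * K))"
    using frac_le[OF zero_le_one order_refl pos le] by (simp add: inverse_eq_divide)
  then show ?thesis unfolding alpha_tilde_eq by (rule min.mono[OF order_refl])
qed

lemma UB_minus_alpha_tilde_le:
  assumes lam: "1 \<le> lam" and \<epsilon>: "0 < \<epsilon>"
    and n_large: "(4 * (2/\<epsilon>) + 4)^2 \<le> n" and defect: "gauss_defect n (2/\<epsilon>) \<le> \<epsilon>^2/8"
  shows "UB \<beta> lam - alpha_tilde \<beta> lam \<le> \<epsilon>"
proof -
  define P where "P = \<rho> + \<gamma> * Phi_div_phi \<gamma>"
  define Q where "Q = \<rho> + \<gamma> * K"
  have G: "1/2 \<le> Phi_div_phi \<gamma>" by (rule Phi_div_phi_ge_half[OF gamma_nonneg])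
  have P_ge_gamma: "\<gamma> / 2 \<le> P"
    using mult_left_mono[OF G gamma_nonneg] rho_pos unfolding P_def by simp
  have P_ge_half: "1/2 \<le> P"
    using mult_left_mono[OF G gamma_nonneg] rho_pos one_le_rho_plus_gamma lam lam_le_n
    unfolding P_def by simp
  have UB_le: "UB \<beta> lam \<le> 1 / P" unfolding P_def by (rule UB_le_inverse)
  show ?thesis
  proof (cases "2/\<epsilon> \<le> \<gamma>")
    case True
    then have "1/\<epsilon> \<le> P" using P_ge_gamma by simp
    then have "1 / P \<le> 1 / (1/\<epsilon>)" using \<epsilon> by (intro frac_le) auto
    then have "1 / P \<le> \<epsilon>" by simp
    then show ?thesis using UB_le alpha_tilde_nonneg by linarith
  next
    case False
    have "P \<le> Q"
      using mult_left_mono[OF Phi_div_phi_gamma_le_K gamma_nonneg] unfolding P_def Q_def by simp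
    then have "1/P - 1/Q \<le> (Q - P) / (1/2)^2"
      using P_ge_half by (intro inverse_diff_le) auto
    also have "\<dots> = 4 * (\<gamma> * (K - Phi_div_phi \<gamma>))"
      unfolding P_def Q_def by (simp add: power2_eq_square algebra_simps)
    also have "\<dots> \<le> 4 * ((2/\<epsilon>) * (\<epsilon>^2/8))"
    proof -
      have "K - Phi_div_phi \<gamma> \<le> \<epsilon>^2/8"
        using K_minus_Phi_div_phi_le_gauss_defect[of "2/\<epsilon>"] False n_large defect by linarith
      then show ?thesis
        using False gamma_nonneg Phi_div_phi_gamma_le_K \<epsilon> by (intro mult_left_mono mult_mono) auto
    qed
    also have "\<dots> = \<epsilon>" using \<epsilon> by (simp add: power2_eq_square)
    finally have "1/P - 1/Q \<le> \<epsilon>" .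
    moreover have "min 1 (1/Q) \<le> alpha_tilde \<beta> lam"
      using alpha_tilde_ge unfolding Q_def .
    ultimately show ?thesis
      using UB_le UB_bounds(2)[OF lam] \<epsilon> by (auto simp: min_def split: if_splits)
  qed
qed

end

lemma UB_zero: "0 < lam \<Longrightarrow> UB 0 lam = 1"
  using staffing.UB_eq[of lam 0]
  by (simp add: staffing_def staffing.n_def staffing.\<rho>_def staffing.\<gamma>_def)

lemma alpha_tilde_zero: "0 < lam \<Longrightarrow> alpha_tilde 0 lam = 1"
  using staffing.alpha_tilde_eq[of lam 0]
  by (simp add: staffing_def staffing.n_def staffing.\<rho>_def staffing.\<gamma>_def)

lemma UB_alpha_tilde_bounds_eventually:
  assumes \<epsilon>: "0 < \<epsilon>"
  shows "\<forall>\<^sub>F lam in at_top. \<forall>\<beta>\<ge>0.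
           0 \<le> alpha_tilde \<beta> lam \<and> alpha_tilde \<beta> lam \<le> 1 \<and> 0 \<le> UB \<beta> lam \<and> UB \<beta> lam \<le> 1
           \<and> UB \<beta> lam - alpha_tilde \<beta> lam \<le> \<epsilon>"
proof -
  have "\<forall>\<^sub>F n in at_top. gauss_defect n (2/\<epsilon>) < \<epsilon>^2/8"
    using order_tendstoD(2)[OF gauss_defect_tendsto_zero, of "2/\<epsilon>" "\<epsilon>^2/8"] \<epsilon> by simp
  then have "\<forall>\<^sub>F n in at_top. (4 * (2/\<epsilon>) + 4)^2 \<le> n \<and> gauss_defect n (2/\<epsilon>) \<le> \<epsilon>^2/8"
    using eventually_ge_at_top by eventually_elim auto
  then obtain N where N: "\<And>n. N \<le> n \<Longrightarrow> (4 * (2/\<epsilon>) + 4)^2 \<le> n \<and> gauss_defect n (2/\<epsilon>) \<le> \<epsilon>^2/8"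
    by (auto simp: eventually_at_top_linorder)
  show ?thesis
    using eventually_ge_at_top[of "max 1 N"]
  proof eventually_elim
    case (elim lam)
    show ?case
    proof (intro allI impI)
      fix \<beta> :: real assume "0 \<le> \<beta>"
      then interpret staffing lam \<beta> using elim by unfold_locales auto
      have "1 \<le> lam" using elim by simp
      moreover have "N \<le> n" using elim lam_le_n by simp
      ultimately show "0 \<le> alpha_tilde \<beta> lam \<and> alpha_tilde \<beta> lam \<le> 1 \<and> 0 \<le> UB \<beta> lam
                         \<and> UB \<beta> lam \<le> 1 \<and> UB \<beta> lam - alpha_tilde \<beta> lam \<le> \<epsilon>"
        using alpha_tilde_nonneg UB_bounds N \<epsilon> UB_minus_alpha_tilde_le
        by (auto simp: alpha_tilde_def erlangC_cont_def)
    qed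
  qed
qed

lemma prod_diff_le_card_mult:
  fixes x y :: "'a \<Rightarrow> real"
  assumes x: "\<And>i. i \<in> A \<Longrightarrow> 0 \<le> x i \<and> x i \<le> 1" and y: "\<And>i. i \<in> A \<Longrightarrow> 0 \<le> y i \<and> y i \<le> 1"
    and diff: "\<And>i. i \<in> A \<Longrightarrow> x i - y i \<le> e" and e: "0 \<le> e"
  shows "(\<Prod>i\<in>A. x i) - (\<Prod>i\<in>A. y i) \<le> real (card A) * e"
  using x y diff
proof (induction A rule: infinite_finite_induct)
  case (insert a A)
  define D where "D = (\<Prod>i\<in>A. x i) - (\<Prod>i\<in>A. y i)"
  define Y where "Y = (\<Prod>i\<in>A. y i)"
  have xa: "0 \<le> x a" "x a \<le> 1" and ya: "0 \<le> y a" "y a \<le> 1" and da: "x a - y a \<le> e"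
    using insert.prems by auto
  have Y: "0 \<le> Y" "Y \<le> 1"
    using insert.prems by (auto simp: Y_def prod_nonneg prod_le_1)
  have IH: "D \<le> real (card A) * e" unfolding D_def using insert.IH insert.prems by auto
  have "x a * D \<le> real (card A) * e"
  proof (cases "0 \<le> D")
    case True
    then show ?thesis using mult_right_mono[OF xa(2) True] IH by simp
  next
    case False
    then have "x a * D \<le> 0" using xa(1) by (simp add: mult_nonneg_nonpos)
    then show ?thesis using e by (smt (verit) of_nat_0_le_iff mult_nonneg_nonneg)
  qed
  moreover have "(x a - y a) * Y \<le> e"
  proof (cases "0 \<le> x a - y a")
    case True
    then show ?thesis using mult_left_mono[OF Y(2) True] da by simp
  next
    case False
    then show ?thesis using Y(1) e by (smt (verit) mult_nonpos_nonneg)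
  qed
  moreover have "(\<Prod>i\<in>insert a A. x i) - (\<Prod>i\<in>insert a A. y i) = x a * D + (x a - y a) * Y"
    using insert.hyps by (simp add: D_def Y_def algebra_simps)
  ultimately show ?case using insert.hyps by (simp add: algebra_simps)
qed (use e in auto)

lemma SUP_ereal_tendsto_zero:
  assumes witness: "\<forall>\<^sub>F m in F. \<exists>x\<in>B. f m x = 0"
    and bound: "\<And>\<epsilon>. 0 < \<epsilon> \<Longrightarrow> \<forall>\<^sub>F m in F. \<forall>x\<in>B. f m x \<le> \<epsilon>"
  shows "((\<lambda>m. SUP x\<in>B. ereal (f m x)) \<longlongrightarrow> 0) F"
proof (rule order_tendstoI)
  fix a :: ereal assume "a < 0"
  show "\<forall>\<^sub>F m in F. a < (SUP x\<in>B. ereal (f m x))"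
    using witness
  proof eventually_elim
    case (elim m)
    then obtain x where "x \<in> B" "f m x = 0" by blast
    then have "0 \<le> (SUP x\<in>B. ereal (f m x))" by (metis SUP_upper zero_ereal_def)
    then show ?case using \<open>a < 0\<close> by simp
  qed
next
  fix a :: ereal assume "0 < a"
  then obtain r where r: "0 < ereal r" "ereal r < a" using ereal_dense2 by blast
  then have "0 < r" by simp
  show "\<forall>\<^sub>F m in F. (SUP x\<in>B. ereal (f m x)) < a"
    using bound[OF \<open>0 < r\<close>]
  proof eventually_elim
    case (elim m)
    then have "(SUP x\<in>B. ereal (f m x)) \<le> ereal r" by (simp add: SUP_least)
    then show ?case using r by simp
  qed
qed

lemma prod_UB_alpha_tilde_gap_eventually:
  assumes lam0: "\<forall>i<L. 0 < lam0 i" and \<epsilon>: "0 < \<epsilon>"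
  shows "\<forall>\<^sub>F m in sequentially. \<forall>\<beta>::nat \<Rightarrow> real. (\<forall>i<L. 0 \<le> \<beta> i) \<longrightarrow>
           (\<Prod>i<L. 1 - alpha_tilde (\<beta> i) (real m * lam0 i))
             - (\<Prod>i<L. 1 - UB (\<beta> i) (real m * lam0 i)) \<le> \<epsilon>"
proof -
  define e where "e = \<epsilon> / (L + 1)"
  have e: "0 < e" using \<epsilon> by (simp add: e_def)
  have "filterlim (\<lambda>m. real m * lam0 i) at_top sequentially" if "i < L" for i
    using lam0 that by (intro filterlim_at_top_mult_tendsto_pos[OF tendsto_const _ filterlim_real_sequentially]) auto
  then have "\<forall>\<^sub>F m in sequentially. \<forall>i\<in>{..<L}. \<forall>b\<ge>0.
               0 \<le> alpha_tilde b (real m * lam0 i) \<and> alpha_tilde b (real m * lam0 i) \<le> 1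
               \<and> 0 \<le> UB b (real m * lam0 i) \<and> UB b (real m * lam0 i) \<le> 1
               \<and> UB b (real m * lam0 i) - alpha_tilde b (real m * lam0 i) \<le> e"
    using eventually_compose_filterlim[OF UB_alpha_tilde_bounds_eventually[OF e]]
    by (intro eventually_ball_finite) auto
  then show ?thesis
  proof eventually_elim
    case (elim m)
    have Le: "real (card {..<L}) * e \<le> \<epsilon>" using \<epsilon> by (simp add: e_def field_simps)
    show ?case
    proof (intro allI impI)
      fix \<beta> :: "nat \<Rightarrow> real" assume "\<forall>i<L. 0 \<le> \<beta> i"
      then have "(\<Prod>i<L. 1 - alpha_tilde (\<beta> i) (real m * lam0 i))
                   - (\<Prod>i<L. 1 - UB (\<beta> i) (real m * lam0 i)) \<le> real (card {..<L}) * e"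
        using elim e by (intro prod_diff_le_card_mult) auto
      then show "(\<Prod>i<L. 1 - alpha_tilde (\<beta> i) (real m * lam0 i))
                   - (\<Prod>i<L. 1 - UB (\<beta> i) (real m * lam0 i)) \<le> \<epsilon>"
        using Le by linarith
    qed
  qed
qed

theorem lemma7:
  fixes L :: nat and \<delta> :: real and lam0 :: "nat \<Rightarrow> real"
    and c :: "nat \<Rightarrow> real \<Rightarrow> real"
  assumes "L \<ge> 1" and "\<delta> > 0"
    and "\<forall>i<L. lam0 i > 0"
    and "\<forall>i<L. continuous_on {0..} (c i)"
    and "\<forall>i<L. strict_mono_on {0..} (c i)"
  shows "(\<lambda>m::nat. SUP \<beta>\<in>{\<beta>::nat \<Rightarrow> real. \<forall>i<L. \<beta> i \<ge> 0}.
            ereal (((\<Sum>i<L. c i (\<beta> i))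
                     + \<delta> * (1 - (\<Prod>i<L. 1 - UB (\<beta> i) (real m * lam0 i))))
                 - ((\<Sum>i<L. c i (\<beta> i))
                     + \<delta> * (1 - (\<Prod>i<L. 1 - alpha_tilde (\<beta> i) (real m * lam0 i))))))
         \<longlonglongrightarrow> 0"
proof -
  note L = assms(1) and \<delta> = assms(2) and lam0 = assms(3)
  have cancel: "((\<Sum>i<L. c i (\<beta> i)) + \<delta> * (1 - (\<Prod>i<L. 1 - UB (\<beta> i) (real m * lam0 i))))
                  - ((\<Sum>i<L. c i (\<beta> i)) + \<delta> * (1 - (\<Prod>i<L. 1 - alpha_tilde (\<beta> i) (real m * lam0 i))))
                = \<delta> * ((\<Prod>i<L. 1 - alpha_tilde (\<beta> i) (real m * lam0 i))
                         - (\<Prod>i<L. 1 - UB (\<beta> i) (real m * lam0 i)))" for m and \<beta> :: "nat \<Rightarrow> real"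
    by (simp add: algebra_simps)
  show ?thesis
    unfolding cancel
  proof (rule SUP_ereal_tendsto_zero)
    text \<open>At \<open>\<beta> = 0\<close> both functions equal 1, so both products vanish.\<close>
    show "\<forall>\<^sub>F m in sequentially. \<exists>\<beta>\<in>{\<beta>. \<forall>i<L. 0 \<le> \<beta> i}.
            \<delta> * ((\<Prod>i<L. 1 - alpha_tilde (\<beta> i) (real m * lam0 i)) - (\<Prod>i<L. 1 - UB (\<beta> i) (real m * lam0 i))) = 0"
      using eventually_ge_at_top[of 1]
      by eventually_elim (rule bexI[of _ "\<lambda>_. 0"], use L lam0 in \<open>auto simp: UB_zero alpha_tilde_zero\<close>)
    fix \<epsilon> :: real assume "0 < \<epsilon>"
    then show "\<forall>\<^sub>F m in sequentially. \<forall>\<beta>\<in>{\<beta>. \<forall>i<L. 0 \<le> \<beta> i}.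
            \<delta> * ((\<Prod>i<L. 1 - alpha_tilde (\<beta> i) (real m * lam0 i)) - (\<Prod>i<L. 1 - UB (\<beta> i) (real m * lam0 i))) \<le> \<epsilon>"
      using prod_UB_alpha_tilde_gap_eventually[OF lam0, of "\<epsilon> / \<delta>"] \<delta>
      by (auto elim!: eventually_mono simp: pos_le_divide_eq mult.commute)
  qed
qed

end
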